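(* Let $\bar\mu,\sigma_1,\dots,\sigma_q>0$, $R_1\in\mathbb{S}^{n_1}_+,\dots,R_q\in\mathbb{S}^{n_q}_+$, $W\in\mathbb{S}^n_+$, and $Z,J\in\mathbb{R}^{m\times n}$. Define $L:=[ZW^{-1}\ \ J]\in\mathbb{R}^{m\times2n}$, $R(\tau):=\bigoplus_{i=1}^qR_ie^{\sigma_i\tau_i}$, $\widehat P(\tau):=W^{-1}\oplus R(\tau)$, $$\mathcal{L}:=\{\bar x\in\mathbb{R}^{2n}:\ |L_{(i)}\bar x|\le\bar u_i,\ i=1,\dots,m\},\qquad \mathcal{Q}_{\bar\mu}:=\{(\bar x,\tau)\in\mathbb{R}^{2n}\times\mathcal{T}:\ \bar x^{\mathsf T}\widehat P(\tau)\bar x\le\bar\mu\}.$$ Assume $$\begin{bmatrix}W&0&Z_{(i)}^{\mathsf T}\\ \star&\bigoplus_{j=1}^qR_j&J_{(i)}^{\mathsf T}\\ \star&\star&\frac{\bar u_i^2}{\bar\mu}\end{bmatrix}\succeq0\qquad\forall i\in\{1,\dots,m\}.$$ Then $\mathcal{Q}_{\bar\mu}\subset\mathcal{L}\times\mathcal{T}$.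
   Context: Integers $n,m\ge1$, $1\le q\le n$, $n_1,\dots,n_q\ge1$ with $\sum n_i=n$; $\bar u=(\bar u_1,\dots,\bar u_m)$ with $\bar u_i>0$; positive reals $T_2^{(1)},\dots,T_2^{(q)}$ and $\mathcal{T}=\prod_i[0,T_2^{(i)}]$. Notation: $\mathbb{S}^k_+$ symmetric positive definite $k\times k$ matrices; $\bigoplus$ block-diagonal direct sum; $\star$ symmetric blocks; $M_{(i)}$ the $i$-th row of $M$. *)

theory Defs
  imports "Jordan_Normal_Form.Matrix"
begin

definition psd_mat :: "real mat \<Rightarrow> bool" where
  "psd_mat M \<longleftrightarrow> square_mat M \<and> transpose_mat M = M \<and>
     (\<forall>x \<in> carrier_vec (dim_row M). x \<bullet> (M *\<^sub>v x) \<ge> 0)"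

definition pd_mat :: "nat \<Rightarrow> real mat \<Rightarrow> bool" where
  "pd_mat k M \<longleftrightarrow> M \<in> carrier_mat k k \<and> transpose_mat M = M \<and>
     (\<forall>x \<in> carrier_vec k. x \<noteq> 0\<^sub>v k \<longrightarrow> x \<bullet> (M *\<^sub>v x) > 0)"

definition mat_inv :: "real mat \<Rightarrow> real mat" where
  "mat_inv W = (THE B. B \<in> carrier_mat (dim_row W) (dim_row W) \<and> inverts_mat W B \<and> inverts_mat B W)"

definition Rsum :: "real mat list \<Rightarrow> real mat" where
  "Rsum Rs = diag_block_mat Rs"

definition Rtau :: "real mat list \<Rightarrow> (nat \<Rightarrow> real) \<Rightarrow> (nat \<Rightarrow> real) \<Rightarrow> real mat" where
  "Rtau Rs \<sigma> \<tau> = diag_block_mat (map (\<lambda>i. exp (\<sigma> i * \<tau> i) \<cdot>\<^sub>m (Rs ! i)) [0..<length Rs])"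

definition Phat :: "real mat \<Rightarrow> real mat list \<Rightarrow> (nat \<Rightarrow> real) \<Rightarrow> (nat \<Rightarrow> real) \<Rightarrow> real mat" where
  "Phat W Rs \<sigma> \<tau> = (let A = mat_inv W; B = Rtau Rs \<sigma> \<tau> in
     four_block_mat A (0\<^sub>m (dim_row A) (dim_col B)) (0\<^sub>m (dim_row B) (dim_col A)) B)"

text \<open>L = [Z W^{-1}  J] (horizontal concatenation, m x 2n).\<close>
definition Lmat :: "real mat \<Rightarrow> real mat \<Rightarrow> real mat \<Rightarrow> real mat" where
  "Lmat Z W J = four_block_mat (Z * mat_inv W) J (0\<^sub>m 0 (dim_row W)) (0\<^sub>m 0 (dim_col J))"

definition Lset :: "nat \<Rightarrow> nat \<Rightarrow> real mat \<Rightarrow> (nat \<Rightarrow> real) \<Rightarrow> real vec set" where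
  "Lset n m L u = {x \<in> carrier_vec (2*n). \<forall>i<m. \<bar>row L i \<bullet> x\<bar> \<le> u i}"

definition Tset :: "nat \<Rightarrow> (nat \<Rightarrow> real) \<Rightarrow> (nat \<Rightarrow> real) set" where
  "Tset q T2 = (\<Pi>\<^sub>E i\<in>{..<q}. {0..T2 i})"

definition Qset :: "nat \<Rightarrow> nat \<Rightarrow> (nat \<Rightarrow> real) \<Rightarrow> real mat \<Rightarrow> real mat list \<Rightarrow> (nat \<Rightarrow> real)
    \<Rightarrow> real \<Rightarrow> (real vec \<times> (nat \<Rightarrow> real)) set" where
  "Qset n q T2 W Rs \<sigma> \<mu> = {(x, \<tau>). x \<in> carrier_vec (2*n) \<and> \<tau> \<in> Tset q T2 \<and>
       x \<bullet> (Phat W Rs \<sigma> \<tau> *\<^sub>v x) \<le> \<mu>}"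

definition LMI_mat :: "real mat \<Rightarrow> real mat list \<Rightarrow> real mat \<Rightarrow> real mat \<Rightarrow> real \<Rightarrow> real \<Rightarrow> nat \<Rightarrow> real mat" where
  "LMI_mat W Rs Z J u \<mu> i = (let
      R = Rsum Rs;
      A = four_block_mat W (0\<^sub>m (dim_row W) (dim_col R)) (0\<^sub>m (dim_row R) (dim_col W)) R;
      v = row Z i @\<^sub>v row J i;
      B = mat (dim_vec v) 1 (\<lambda>(k, _). v $ k);
      C = mat 1 (dim_vec v) (\<lambda>(_, k). v $ k);
      D = mat 1 1 (\<lambda>_. u\<^sup>2 / \<mu>)
    in four_block_mat A B C D)"

end

theory Submission
  imports Defs "Jordan_Normal_Form.Determinant"
begin

(* Let (x, tau) be in Q_mu and split x = (x1, x2). Testing the i-th LMI against the vector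
   (W^-1 x1, x2, t) shows that for every real t
     0 <= x1' W^-1 x1 + x2' (R_1 (+) ... (+) R_q) x2 + 2 t L_(i) x + t^2 u_i^2 / mu.
   Since sigma_j tau_j >= 0, each block satisfies R_j <= e^(sigma_j tau_j) R_j in the Loewner order,
   so the constant term is at most x' Phat(tau) x <= mu, and minimising over t gives
   (L_(i) x)^2 <= u_i^2. *)

definition loewner_le :: "nat \<Rightarrow> real mat \<Rightarrow> real mat \<Rightarrow> bool" where
  "loewner_le k A B \<longleftrightarrow> A \<in> carrier_mat k k \<and> B \<in> carrier_mat k k \<and>
     (\<forall>x \<in> carrier_vec k. x \<bullet> (A *\<^sub>v x) \<le> x \<bullet> (B *\<^sub>v x))"

lemma smult_mat_mult_mat_vec:
  "dim_vec x = dim_col A \<Longrightarrow> (c \<cdot>\<^sub>m (A :: real mat)) *\<^sub>v x = c \<cdot>\<^sub>v (A *\<^sub>v x)"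
  by (intro eq_vecI) (auto simp: mult_mat_vec_def)

lemma scalar_prod_four_block_diag_mult_vec:
  fixes A D :: "real mat"
  assumes A: "A \<in> carrier_mat k k" and D: "D \<in> carrier_mat l l"
    and a: "a \<in> carrier_vec k" and d: "d \<in> carrier_vec l"
  shows "(a @\<^sub>v d) \<bullet> (four_block_mat A (0\<^sub>m k l) (0\<^sub>m l k) D *\<^sub>v (a @\<^sub>v d)) =
    a \<bullet> (A *\<^sub>v a) + d \<bullet> (D *\<^sub>v d)"
  unfolding mult_mat_vec_split[OF A D a d]
  by (rule scalar_prod_append[OF a d]) (use A D a d in auto)

lemma loewner_le_four_block_diag:
  assumes "loewner_le k A B" and "loewner_le l C D"
  shows "loewner_le (k + l) (four_block_mat A (0\<^sub>m k l) (0\<^sub>m l k) C)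
    (four_block_mat B (0\<^sub>m k l) (0\<^sub>m l k) D)"
  unfolding loewner_le_def
proof (intro conjI ballI)
  have A: "A \<in> carrier_mat k k" and B: "B \<in> carrier_mat k k"
    and C: "C \<in> carrier_mat l l" and D: "D \<in> carrier_mat l l"
    using assms unfolding loewner_le_def by auto
  then show "four_block_mat A (0\<^sub>m k l) (0\<^sub>m l k) C \<in> carrier_mat (k + l) (k + l)"
    and "four_block_mat B (0\<^sub>m k l) (0\<^sub>m l k) D \<in> carrier_mat (k + l) (k + l)"
    by auto
  fix x :: "real vec" assume x: "x \<in> carrier_vec (k + l)"
  define a d where "a = vec_first x k" and "d = vec_last x l"
  have a: "a \<in> carrier_vec k" and d: "d \<in> carrier_vec l" unfolding a_def d_def by auto
  have x_split: "x = a @\<^sub>v d" using x unfolding a_def d_def by simp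
  show "x \<bullet> (four_block_mat A (0\<^sub>m k l) (0\<^sub>m l k) C *\<^sub>v x)
      \<le> x \<bullet> (four_block_mat B (0\<^sub>m k l) (0\<^sub>m l k) D *\<^sub>v x)"
    unfolding x_split scalar_prod_four_block_diag_mult_vec[OF A C a d]
      scalar_prod_four_block_diag_mult_vec[OF B D a d]
    using assms a d unfolding loewner_le_def by (intro add_mono) auto
qed

lemma loewner_le_diag_block_mat:
  assumes "length As = length Bs"
    and "\<forall>i < length As. loewner_le (dim_row (As ! i)) (As ! i) (Bs ! i)"
  shows "loewner_le (sum_list (map dim_row As)) (diag_block_mat As) (diag_block_mat Bs)"
  using assms
proof (induction As Bs rule: list_induct2)
  case Nil
  then show ?case by (simp add: loewner_le_def)
next
  case (Cons A As B Bs)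
  have head: "loewner_le (dim_row A) A B" using Cons.prems[rule_format, of 0] by simp
  have tail: "loewner_le (sum_list (map dim_row As)) (diag_block_mat As) (diag_block_mat Bs)"
  proof (rule Cons.IH, intro allI impI)
    fix i assume "i < length As"
    then show "loewner_le (dim_row (As ! i)) (As ! i) (Bs ! i)"
      using Cons.prems[rule_format, of "Suc i"] by simp
  qed
  have "dim_col A = dim_row A" "dim_row B = dim_row A" "dim_col B = dim_row A"
    "dim_col (diag_block_mat As) = sum_list (map dim_row As)"
    "dim_row (diag_block_mat Bs) = sum_list (map dim_row As)"
    "dim_col (diag_block_mat Bs) = sum_list (map dim_row As)"
    using head tail unfolding loewner_le_def by auto
  then show ?case
    using loewner_le_four_block_diag[OF head tail]
    by (simp only: diag_block_mat.simps Let_def list.map sum_list.Cons dim_diag_block_mat(1))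
qed

lemma loewner_le_smult:
  fixes A :: "real mat"
  assumes A: "A \<in> carrier_mat k k" and nonneg: "\<forall>x \<in> carrier_vec k. 0 \<le> x \<bullet> (A *\<^sub>v x)"
    and c: "1 \<le> c"
  shows "loewner_le k A (c \<cdot>\<^sub>m A)"
  unfolding loewner_le_def
proof (intro conjI ballI)
  fix x :: "real vec" assume x: "x \<in> carrier_vec k"
  have "x \<bullet> (A *\<^sub>v x) \<le> c * (x \<bullet> (A *\<^sub>v x))"
    using mult_right_mono[OF c] nonneg x by simp
  also have "\<dots> = x \<bullet> ((c \<cdot>\<^sub>m A) *\<^sub>v x)"
    using A x by (simp add: smult_mat_mult_mat_vec)
  finally show "x \<bullet> (A *\<^sub>v x) \<le> x \<bullet> ((c \<cdot>\<^sub>m A) *\<^sub>v x)" .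
qed (use A in simp_all)

lemma pd_mat_quad_nonneg:
  assumes "pd_mat k A" and "x \<in> carrier_vec k"
  shows "0 \<le> x \<bullet> (A *\<^sub>v x)"
  using assms unfolding pd_mat_def
  by (cases "x = 0\<^sub>v k") (auto intro: less_imp_le)

lemma Rsum_loewner_le_Rtau:
  assumes len: "length Rs = length ns" and pd: "\<forall>i < length ns. pd_mat (ns ! i) (Rs ! i)"
    and exponent: "\<forall>i < length ns. 0 \<le> \<sigma> i * \<tau> i"
  shows "loewner_le (sum_list ns) (Rsum Rs) (Rtau Rs \<sigma> \<tau>)"
proof -
  have dims: "map dim_row Rs = ns"
    using len pd by (intro nth_equalityI) (auto simp: pd_mat_def)
  have "loewner_le (sum_list (map dim_row Rs)) (diag_block_mat Rs)
      (diag_block_mat (map (\<lambda>i. exp (\<sigma> i * \<tau> i) \<cdot>\<^sub>m (Rs ! i)) [0..<length Rs]))"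
  proof (rule loewner_le_diag_block_mat, simp, intro allI impI)
    fix i assume i: "i < length Rs"
    have pd_i: "pd_mat (ns ! i) (Rs ! i)" using i len pd by simp
    then have R_i: "Rs ! i \<in> carrier_mat (ns ! i) (ns ! i)" unfolding pd_mat_def by simp
    have "1 \<le> exp (\<sigma> i * \<tau> i)" using i len exponent by simp
    then have "loewner_le (ns ! i) (Rs ! i) (exp (\<sigma> i * \<tau> i) \<cdot>\<^sub>m (Rs ! i))"
      using R_i pd_mat_quad_nonneg[OF pd_i] by (intro loewner_le_smult) auto
    then show "loewner_le (dim_row (Rs ! i)) (Rs ! i)
        (map (\<lambda>i. exp (\<sigma> i * \<tau> i) \<cdot>\<^sub>m (Rs ! i)) [0..<length Rs] ! i)"
      using i R_i by simp
  qed
  then show ?thesis unfolding Rsum_def Rtau_def dims .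
qed

lemma pd_mat_mat_inv:
  assumes pd: "pd_mat n W"
  shows "mat_inv W \<in> carrier_mat n n" and "W * mat_inv W = 1\<^sub>m n"
proof -
  have W: "W \<in> carrier_mat n n" using pd unfolding pd_mat_def by auto
  have "det W \<noteq> 0"
  proof
    assume "det W = 0"
    then obtain v where v: "v \<in> carrier_vec n" "v \<noteq> 0\<^sub>v n" "W *\<^sub>v v = 0\<^sub>v n"
      using det_0_iff_vec_prod_zero_field[OF W] by auto
    then have "v \<bullet> (W *\<^sub>v v) > 0" using pd unfolding pd_mat_def by auto
    then show False using v by simp
  qed
  then obtain B where B: "B \<in> carrier_mat n n" "B * W = 1\<^sub>m n" "W * B = 1\<^sub>m n"
    using det_non_zero_imp_unit[OF W, of "()"] unfolding Units_def ring_mat_def by auto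
  have "mat_inv W = B"
    unfolding mat_inv_def
  proof (rule the_equality)
    show "B \<in> carrier_mat (dim_row W) (dim_row W) \<and> inverts_mat W B \<and> inverts_mat B W"
      using B W unfolding inverts_mat_def by auto
    fix B' assume "B' \<in> carrier_mat (dim_row W) (dim_row W) \<and> inverts_mat W B' \<and> inverts_mat B' W"
    then have B': "B' \<in> carrier_mat n n" "B' * W = 1\<^sub>m n" using W unfolding inverts_mat_def by auto
    have "B' = B' * (W * B)" using B' B by simp
    also have "\<dots> = (B' * W) * B" using assoc_mult_mat[OF B'(1) W B(1)] by simp
    also have "\<dots> = B" using B' B by simp
    finally show "B' = B" .
  qed
  then show "mat_inv W \<in> carrier_mat n n" and "W * mat_inv W = 1\<^sub>m n" using B by simp_all
qed

lemma abs_le_if_quadratic_nonneg: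
  fixes c s u \<mu> :: real
  assumes "c \<le> \<mu>" and "\<mu> > 0" and "u > 0" and "\<And>t. 0 \<le> c + 2 * t * s + t * t * (u\<^sup>2 / \<mu>)"
  shows "\<bar>s\<bar> \<le> u"
proof -
  define t where "t = - s * \<mu> / u\<^sup>2"
  have "0 \<le> c + 2 * t * s + t * t * (u\<^sup>2 / \<mu>)" by (rule assms(4))
  also have "\<dots> = c - s\<^sup>2 * \<mu> / u\<^sup>2"
    unfolding t_def using assms(2,3) by (simp add: field_simps power2_eq_square)
  finally have "s\<^sup>2 * \<mu> \<le> c * u\<^sup>2" using assms(3) by (simp add: field_simps)
  also have "\<dots> \<le> \<mu> * u\<^sup>2" using assms(1) by (simp add: mult_right_mono)
  finally have "s\<^sup>2 \<le> u\<^sup>2" using assms(2) by (simp add: mult.commute)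
  then show ?thesis using abs_le_square_iff[of s u] assms(3) by simp
qed

lemma scalar_prod_bordered_mat:
  fixes A :: "real mat" and v w :: "real vec"
  assumes A: "A \<in> carrier_mat k k" and v: "v \<in> carrier_vec k" and w: "w \<in> carrier_vec k"
  shows "(w @\<^sub>v vec 1 (\<lambda>_. t)) \<bullet> (four_block_mat A (mat k 1 (\<lambda>(j, _). v $ j))
      (mat 1 k (\<lambda>(_, j). v $ j)) (mat 1 1 (\<lambda>_. d)) *\<^sub>v (w @\<^sub>v vec 1 (\<lambda>_. t)))
    = w \<bullet> (A *\<^sub>v w) + 2 * t * (v \<bullet> w) + t * t * d"
proof -
  define B :: "real mat" where "B = mat k 1 (\<lambda>(j, _). v $ j)"
  define C :: "real mat" where "C = mat 1 k (\<lambda>(_, j). v $ j)"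
  define D :: "real mat" where "D = mat 1 1 (\<lambda>_. d)"
  define e :: "real vec" where "e = vec 1 (\<lambda>_. t)"
  have B: "B \<in> carrier_mat k 1" and C: "C \<in> carrier_mat 1 k" and D: "D \<in> carrier_mat 1 1"
    and e: "e \<in> carrier_vec 1"
    unfolding B_def C_def D_def e_def by auto
  have Be: "B *\<^sub>v e = t \<cdot>\<^sub>v v"
    using v by (intro eq_vecI) (auto simp: B_def e_def mult_mat_vec_def scalar_prod_def)
  have Cw: "e \<bullet> (C *\<^sub>v w) = t * (v \<bullet> w)"
    using v w by (auto simp: C_def e_def mult_mat_vec_def scalar_prod_def)
  have De: "e \<bullet> (D *\<^sub>v e) = t * t * d"
    by (auto simp: D_def e_def mult_mat_vec_def scalar_prod_def)
  have "(w @\<^sub>v e) \<bullet> (four_block_mat A B C D *\<^sub>v (w @\<^sub>v e))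
      = w \<bullet> (A *\<^sub>v w + B *\<^sub>v e) + e \<bullet> (C *\<^sub>v w + D *\<^sub>v e)"
    unfolding four_block_mat_mult_vec[OF A B C D w e]
    by (rule scalar_prod_append[OF w e]) (use A B C D w e in auto)
  also have "\<dots> = w \<bullet> (A *\<^sub>v w) + w \<bullet> (B *\<^sub>v e) + (e \<bullet> (C *\<^sub>v w) + e \<bullet> (D *\<^sub>v e))"
    using A B C D w e by (simp add: scalar_prod_add_distrib)
  also have "\<dots> = w \<bullet> (A *\<^sub>v w) + 2 * t * (v \<bullet> w) + t * t * d"
    unfolding Be Cw De using comm_scalar_prod[OF v w] v w by simp
  finally show ?thesis unfolding B_def C_def D_def e_def .
qed

lemma scalar_prod_LMI_mat:
  assumes W: "W \<in> carrier_mat n n" and R: "Rsum Rs \<in> carrier_mat n n"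
    and Z: "Z \<in> carrier_mat m n" and J: "J \<in> carrier_mat m n" and i: "i < m"
    and a: "a \<in> carrier_vec n" and d: "d \<in> carrier_vec n"
  shows "((a @\<^sub>v d) @\<^sub>v vec 1 (\<lambda>_. t)) \<bullet> (LMI_mat W Rs Z J u \<mu> i *\<^sub>v ((a @\<^sub>v d) @\<^sub>v vec 1 (\<lambda>_. t)))
    = a \<bullet> (W *\<^sub>v a) + d \<bullet> (Rsum Rs *\<^sub>v d) + 2 * t * (row Z i \<bullet> a + row J i \<bullet> d)
      + t * t * (u\<^sup>2 / \<mu>)"
proof -
  define v where "v = row Z i @\<^sub>v row J i"
  have v: "v \<in> carrier_vec (n + n)" unfolding v_def using Z J i by auto
  have ad: "a @\<^sub>v d \<in> carrier_vec (n + n)" using a d by auto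
  have "v \<bullet> (a @\<^sub>v d) = row Z i \<bullet> a + row J i \<bullet> d"
    unfolding v_def by (rule scalar_prod_append) (use Z J i a d in auto)
  moreover have "LMI_mat W Rs Z J u \<mu> i = four_block_mat
      (four_block_mat W (0\<^sub>m n n) (0\<^sub>m n n) (Rsum Rs))
      (mat (n + n) 1 (\<lambda>(j, _). v $ j)) (mat 1 (n + n) (\<lambda>(_, j). v $ j)) (mat 1 1 (\<lambda>_. u\<^sup>2 / \<mu>))"
    unfolding LMI_mat_def Let_def v_def[symmetric] using W R v by simp
  ultimately show ?thesis
    using scalar_prod_bordered_mat[OF four_block_carrier_mat[OF W R] v ad]
      scalar_prod_four_block_diag_mult_vec[OF W R a d] by simp
qed

lemma scalar_prod_Phat:
  assumes "mat_inv W \<in> carrier_mat n n" and "Rtau Rs \<sigma> \<tau> \<in> carrier_mat n n"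
    and "a \<in> carrier_vec n" and "d \<in> carrier_vec n"
  shows "(a @\<^sub>v d) \<bullet> (Phat W Rs \<sigma> \<tau> *\<^sub>v (a @\<^sub>v d)) =
    a \<bullet> (mat_inv W *\<^sub>v a) + d \<bullet> (Rtau Rs \<sigma> \<tau> *\<^sub>v d)"
  using scalar_prod_four_block_diag_mult_vec[OF assms] assms(1,2)
  unfolding Phat_def Let_def by simp

lemma row_Lmat_scalar_prod:
  assumes W: "W \<in> carrier_mat n n" and W_inv: "mat_inv W \<in> carrier_mat n n"
    and Z: "Z \<in> carrier_mat m n" and J: "J \<in> carrier_mat m n" and i: "i < m"
    and a: "a \<in> carrier_vec n" and d: "d \<in> carrier_vec n"
  shows "row (Lmat Z W J) i \<bullet> (a @\<^sub>v d) = row Z i \<bullet> (mat_inv W *\<^sub>v a) + row J i \<bullet> d"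
proof -
  have ZW: "Z * mat_inv W \<in> carrier_mat m n" using Z W_inv by simp
  have "row (Lmat Z W J) i = row (Z * mat_inv W) i @\<^sub>v row J i"
    unfolding Lmat_def using row_four_block_mat(1)[OF ZW J, of "0\<^sub>m 0 n" 0 "0\<^sub>m 0 n"] i W J by simp
  then have "row (Lmat Z W J) i \<bullet> (a @\<^sub>v d) = row (Z * mat_inv W) i \<bullet> a + row J i \<bullet> d"
    by (metis scalar_prod_append row_carrier carrier_matD(2) ZW J a d)
  also have "row (Z * mat_inv W) i \<bullet> a = ((Z * mat_inv W) *\<^sub>v a) $ i"
    using i Z by (simp add: mult_mat_vec_def)
  also have "\<dots> = row Z i \<bullet> (mat_inv W *\<^sub>v a)"
    using i Z W_inv a by simp
  finally show ?thesis .
qed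

lemma row_Lmat_bound:
  assumes W: "pd_mat n W" and R: "Rsum Rs \<in> carrier_mat n n"
    and Z: "Z \<in> carrier_mat m n" and J: "J \<in> carrier_mat m n" and i: "i < m"
    and \<mu>: "\<mu> > 0" and u: "u > 0" and LMI: "psd_mat (LMI_mat W Rs Z J u \<mu> i)"
    and a: "a \<in> carrier_vec n" and d: "d \<in> carrier_vec n"
    and level: "a \<bullet> (mat_inv W *\<^sub>v a) + d \<bullet> (Rsum Rs *\<^sub>v d) \<le> \<mu>"
  shows "\<bar>row (Lmat Z W J) i \<bullet> (a @\<^sub>v d)\<bar> \<le> u"
proof -
  have W_carrier: "W \<in> carrier_mat n n" using W unfolding pd_mat_def by simp
  note W_inv = pd_mat_mat_inv[OF W]
  define y where "y = mat_inv W *\<^sub>v a"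
  have y: "y \<in> carrier_vec n" unfolding y_def using W_inv a by simp
  have "W *\<^sub>v y = a"
    unfolding y_def using assoc_mult_mat_vec[OF W_carrier W_inv(1) a, symmetric] W_inv(2) a by simp
  then have yWy: "y \<bullet> (W *\<^sub>v y) = a \<bullet> (mat_inv W *\<^sub>v a)"
    using comm_scalar_prod[OF y a] unfolding y_def by simp
  have dim_LMI: "dim_row (LMI_mat W Rs Z J u \<mu> i) = n + n + 1"
    unfolding LMI_mat_def Let_def using W_carrier R by simp
  have "(y @\<^sub>v d) @\<^sub>v vec 1 (\<lambda>_. t) \<in> carrier_vec (dim_row (LMI_mat W Rs Z J u \<mu> i))" for t
    unfolding dim_LMI by (intro append_carrier_vec y d) auto
  then have "0 \<le> ((y @\<^sub>v d) @\<^sub>v vec 1 (\<lambda>_. t)) \<bullet>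
      (LMI_mat W Rs Z J u \<mu> i *\<^sub>v ((y @\<^sub>v d) @\<^sub>v vec 1 (\<lambda>_. t)))" for t
    using LMI unfolding psd_mat_def by blast
  then have "0 \<le> (a \<bullet> (mat_inv W *\<^sub>v a) + d \<bullet> (Rsum Rs *\<^sub>v d))
      + 2 * t * (row Z i \<bullet> y + row J i \<bullet> d) + t * t * (u\<^sup>2 / \<mu>)" for t
    using scalar_prod_LMI_mat[OF W_carrier R Z J i y d] unfolding yWy by simp
  then have "\<bar>row Z i \<bullet> y + row J i \<bullet> d\<bar> \<le> u"
    by (rule abs_le_if_quadratic_nonneg[OF level \<mu> u])
  then show ?thesis
    unfolding row_Lmat_scalar_prod[OF W_carrier W_inv(1) Z J i a d] y_def .
qed

theorem lemma3:
  fixes n m q :: nat and ns :: "nat list" and ubar :: "nat \<Rightarrow> real" and T2 :: "nat \<Rightarrow> real"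
    and \<mu> :: real and \<sigma> :: "nat \<Rightarrow> real" and Rs :: "real mat list" and W Z J :: "real mat"
  assumes "n \<ge> 1" and "m \<ge> 1" and "1 \<le> q" and "q \<le> n"
    and "length ns = q" and "\<forall>i<q. ns ! i \<ge> 1" and "sum_list ns = n"
    and "\<forall>i<m. ubar i > 0"
    and "\<forall>i<q. T2 i > 0"
    and "\<mu> > 0" and "\<forall>i<q. \<sigma> i > 0"
    and "length Rs = q" and "\<forall>i<q. pd_mat (ns ! i) (Rs ! i)"
    and "pd_mat n W"
    and "Z \<in> carrier_mat m n" and "J \<in> carrier_mat m n"
    and "\<forall>i<m. psd_mat (LMI_mat W Rs Z J (ubar i) \<mu> i)"
  shows "Qset n q T2 W Rs \<sigma> \<mu> \<subseteq> Lset n m (Lmat Z W J) ubar \<times> Tset q T2"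
proof clarify
  fix x \<tau> assume "(x, \<tau>) \<in> Qset n q T2 W Rs \<sigma> \<mu>"
  then have x: "x \<in> carrier_vec (n + n)" and \<tau>: "\<tau> \<in> Tset q T2"
    and level: "x \<bullet> (Phat W Rs \<sigma> \<tau> *\<^sub>v x) \<le> \<mu>"
    unfolding Qset_def by (auto simp: mult_2)
  have "\<forall>i < q. 0 \<le> \<sigma> i * \<tau> i"
    using \<tau> assms(11) unfolding Tset_def by (auto simp: PiE_iff less_imp_le)
  then have R: "loewner_le n (Rsum Rs) (Rtau Rs \<sigma> \<tau>)"
    using Rsum_loewner_le_Rtau[of Rs ns \<sigma> \<tau>] assms(5,7,12,13) by simp
  define a d where "a = vec_first x n" and "d = vec_last x n"
  have a: "a \<in> carrier_vec n" and d: "d \<in> carrier_vec n" and x_split: "x = a @\<^sub>v d"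
    using x unfolding a_def d_def by auto
  have "a \<bullet> (mat_inv W *\<^sub>v a) + d \<bullet> (Rsum Rs *\<^sub>v d) \<le> \<mu>"
    using level R a d pd_mat_mat_inv(1)[OF assms(14)]
    unfolding x_split loewner_le_def by (auto simp: scalar_prod_Phat)
  then have "\<forall>i < m. \<bar>row (Lmat Z W J) i \<bullet> x\<bar> \<le> ubar i"
    using R assms(8,10,14-17) a d unfolding x_split loewner_le_def
    by (auto intro: row_Lmat_bound)
  with x \<tau> show "x \<in> Lset n m (Lmat Z W J) ubar \<and> \<tau> \<in> Tset q T2"
    unfolding Lset_def by (simp add: mult_2)
qed

end
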